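(* Consider the ODE system $$\frac{du}{dt}=a_1u-b_1u^2-c_1uv,\qquad \frac{dv}{dt}=\frac{a_2v}{1+ku}-b_2v^2-c_2uv,$$ with positive parameters $a_1,a_2,b_1,b_2,c_1,c_2$. For every value of $k\ge0$, the system has no periodic orbits in the nonnegative quadrant $\{u\ge0,v\ge0\}$.
   Context: The state space is the biologically feasible nonnegative quadrant of population densities. *)

theory Defs
  imports Complex_Main
begin

definition is_solution ::
  "real \<Rightarrow> real \<Rightarrow> real \<Rightarrow> real \<Rightarrow> real \<Rightarrow> real \<Rightarrow> real \<Rightarrow>
   (real \<Rightarrow> real) \<Rightarrow> (real \<Rightarrow> real) \<Rightarrow> bool" where
  "is_solution a1 b1 c1 a2 b2 c2 k u v \<longleftrightarrow>
     (\<forall>t. (u has_real_derivative (a1 * u t - b1 * (u t)^2 - c1 * u t * v t)) (at t) \<and>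
          (v has_real_derivative (a2 * v t / (1 + k * u t) - b2 * (v t)^2 - c2 * u t * v t)) (at t))"

definition periodic_orbit ::
  "real \<Rightarrow> real \<Rightarrow> real \<Rightarrow> real \<Rightarrow> real \<Rightarrow> real \<Rightarrow> real \<Rightarrow>
   (real \<Rightarrow> real) \<Rightarrow> (real \<Rightarrow> real) \<Rightarrow> bool" where
  "periodic_orbit a1 b1 c1 a2 b2 c2 k u v \<longleftrightarrow>
     is_solution a1 b1 c1 a2 b2 c2 k u v \<and>
     (\<exists>T>0. \<forall>t. u (t + T) = u t \<and> v (t + T) = v t) \<and>
     \<not> (\<exists>p q. \<forall>t. u t = p \<and> v t = q)"

end

(*
  Write u' = u f and v' = v g with the per-capita growth rates f and g. Along any solution
    (f g)' = - (b1 u + b2 v) f g - D,   D = c1 v g^2 + (a2 k / (1 + k u)^2 + c2) u f^2 >= 0,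
  so f g exp (\<integral> (b1 u + b2 v)) never increases. If f g >= 0 at some point of a periodic orbit,
  returning to that point after one period forces D = 0 over a whole period, hence u' = v' = 0
  there. Otherwise f g < 0 everywhere, so f and g never vanish and have constant sign; then u and
  v are monotone and, being periodic, constant.
*)
theory Submission
  imports Defs "HOL-Analysis.Analysis" "HOL-Library.Periodic_Fun"
begin

lemma periodic_value_in_period:
  fixes h :: "real \<Rightarrow> 'a"
  assumes "T > 0" and periodic: "\<And>t. h (t + T) = h t"
  obtains s where "s \<in> {a..a + T}" "h t = h s"
proof
  interpret periodic_fun_simple h T by unfold_locales (rule periodic)
  define n where "n = \<lfloor>(t - a) / T\<rfloor>"
  have "real_of_int n * T \<le> t - a" "t - a < (real_of_int n + 1) * T"
    unfolding n_def using floor_divide_lower floor_divide_upper \<open>T > 0\<close> by blast+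
  then show "t - real_of_int n * T \<in> {a..a + T}"
    by (simp add: algebra_simps)
  show "h t = h (t - real_of_int n * T)"
    using plus_of_int[of "t - real_of_int n * T" n] by simp
qed

lemma periodic_deriv_nonneg_imp_const:
  fixes h d :: "real \<Rightarrow> real"
  assumes "T > 0" and periodic: "\<And>t. h (t + T) = h t"
    and deriv: "\<And>t. (h has_real_derivative d t) (at t)" and nonneg: "\<And>t. d t \<ge> 0"
  shows "h t = h 0"
proof -
  obtain s where s: "s \<in> {0..0 + T}" "h t = h s"
    using periodic_value_in_period[where h = h and a = 0 and t = t, OF \<open>T > 0\<close> periodic] .
  have mono: "h x \<le> h y" if "x \<le> y" for x y
    using DERIV_nonneg_imp_nondecreasing[OF that] deriv nonneg by blast
  have "h 0 \<le> h s" "h s \<le> h (0 + T)"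
    using s(1) mono by simp_all
  then show ?thesis
    using s(2) periodic[of 0] by simp
qed

lemma periodic_deriv_sign_imp_const:
  fixes h d :: "real \<Rightarrow> real"
  assumes "T > 0" and periodic: "\<And>t. h (t + T) = h t"
    and deriv: "\<And>t. (h has_real_derivative d t) (at t)"
    and sign: "(\<forall>t. d t \<ge> 0) \<or> (\<forall>t. d t \<le> 0)"
  shows "h t = h 0"
  using sign
proof
  assume "\<forall>t. d t \<ge> 0"
  then show ?thesis
    by (intro periodic_deriv_nonneg_imp_const[OF \<open>T > 0\<close>, where d = d]) (simp_all add: periodic deriv)
next
  assume "\<forall>t. d t \<le> 0"
  then have "- h t = - h 0"
    by (intro periodic_deriv_nonneg_imp_const[OF \<open>T > 0\<close>, where d = "\<lambda>t. - d t"])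
      (simp_all add: periodic deriv DERIV_minus)
  then show ?thesis by simp
qed

lemma periodic_deriv_zero_on_period_imp_const:
  fixes h d :: "real \<Rightarrow> real"
  assumes "T > 0" and periodic: "\<And>t. h (t + T) = h t"
    and deriv: "\<And>t. (h has_real_derivative d t) (at t)"
    and zero: "\<And>t. a < t \<Longrightarrow> t < a + T \<Longrightarrow> d t = 0"
  shows "h t = h a"
proof -
  obtain s where s: "s \<in> {a..a + T}" "h t = h s"
    using periodic_value_in_period[where h = h and a = a and t = t, OF \<open>T > 0\<close> periodic] .
  have "h s = h a"
  proof (rule DERIV_isconst2[of a "a + T" h])
    show "continuous_on {a..a + T} h"
      using deriv by (intro continuous_at_imp_continuous_on ballI DERIV_isCont) blast
    fix x assume "a < x" "x < a + T"
    then show "(h has_real_derivative 0) (at x)"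
      using deriv[of x] zero[of x] by simp
  qed (use s(1) \<open>T > 0\<close> in auto)
  with s(2) show ?thesis by simp
qed

lemma continuous_nonzero_imp_sign:
  fixes f :: "real \<Rightarrow> real"
  assumes "continuous_on UNIV f" and "\<And>t. f t \<noteq> 0"
  shows "(\<forall>t. f t > 0) \<or> (\<forall>t. f t < 0)"
proof (rule ccontr)
  assume "\<not> ?thesis"
  then obtain t1 t2 where "f t1 \<le> 0" "0 \<le> f t2"
    by (auto simp: not_less)
  then have "0 \<in> closed_segment (f t1) (f t2)"
    by (simp add: closed_segment_eq_real_ivl)
  then obtain t where "f t = 0"
    using IVT'_closed_segment_real continuous_on_subset[OF assms(1)] by blast
  with assms(2) show False by blast
qed

lemma nonneg_mult_constant_sign:
  fixes f x :: "real \<Rightarrow> real"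
  assumes "(\<forall>t. f t > 0) \<or> (\<forall>t. f t < 0)" and "\<And>t. x t \<ge> 0"
  shows "(\<forall>t. x t * f t \<ge> 0) \<or> (\<forall>t. x t * f t \<le> 0)"
  using assms by (metis less_imp_le mult_nonneg_nonneg mult_nonneg_nonpos)

lemma antiderivative_at_continuous:
  fixes w :: "real \<Rightarrow> real"
  assumes "continuous_on UNIV w"
  obtains S where "\<And>t. a \<le> t \<Longrightarrow> t \<le> b \<Longrightarrow> (S has_real_derivative w t) (at t)"
proof
  fix t assume "a \<le> t" "t \<le> b"
  then have "t \<in> {a - 1<..<b + 1}" by simp
  moreover have "((\<lambda>x. integral {a - 1..x} w) has_real_derivative w t) (at t within {a - 1..b + 1})"
    using \<open>t \<in> _\<close> continuous_on_subset[OF assms]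
    by (intro integral_has_real_derivative) auto
  ultimately show "((\<lambda>x. integral {a - 1..x} w) has_real_derivative w t) (at t)"
    by (simp add: at_within_Icc_at)
qed

lemma subsolution_no_decay_imp_solution:
  fixes P p w :: "real \<Rightarrow> real"
  assumes "a \<le> b" and "0 \<le> P a" and "P a \<le> P b"
    and deriv: "\<And>s. a \<le> s \<Longrightarrow> s \<le> b \<Longrightarrow> (P has_real_derivative p s) (at s)"
    and "continuous_on UNIV w" and w_nonneg: "\<And>s. a \<le> s \<Longrightarrow> s \<le> b \<Longrightarrow> w s \<ge> 0"
    and subsolution: "\<And>s. a \<le> s \<Longrightarrow> s \<le> b \<Longrightarrow> p s \<le> - w s * P s"
    and "a < t" "t < b"
  shows "p t = - w t * P t"
proof -
  obtain S where S: "\<And>t. a \<le> t \<Longrightarrow> t \<le> b \<Longrightarrow> (S has_real_derivative w t) (at t)"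
    using antiderivative_at_continuous[OF \<open>continuous_on UNIV w\<close>] by blast
  define \<Phi> where "\<Phi> t = P t * exp (S t)" for t
  have \<Phi>_deriv: "(\<Phi> has_real_derivative (p t + w t * P t) * exp (S t)) (at t)"
    if "a \<le> t" "t \<le> b" for t
    using DERIV_mult[OF deriv[OF that] DERIV_chain2[OF DERIV_exp S[OF that]]]
    unfolding \<Phi>_def[abs_def] by (simp add: algebra_simps)
  have \<Phi>_antimono: "\<Phi> y \<le> \<Phi> x" if "a \<le> x" "x \<le> y" "y \<le> b" for x y
  proof (rule DERIV_nonpos_imp_nonincreasing[OF \<open>x \<le> y\<close>])
    fix s assume "x \<le> s" "s \<le> y"
    then show "\<exists>d. (\<Phi> has_real_derivative d) (at s) \<and> d \<le> 0"
      using that \<Phi>_deriv[of s] subsolution[of s] \<open>x \<le> s\<close> \<open>s \<le> y\<close>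
      by (intro exI[of _ "(p s + w s * P s) * exp (S s)"]) (simp add: mult_nonpos_nonneg)
  qed
  have "S a \<le> S b"
    using DERIV_nonneg_imp_nondecreasing[OF \<open>a \<le> b\<close>] S w_nonneg by blast
  then have "\<Phi> a \<le> P a * exp (S b)"
    unfolding \<Phi>_def using \<open>0 \<le> P a\<close> by (intro mult_left_mono) auto
  also have "\<dots> \<le> \<Phi> b"
    unfolding \<Phi>_def using \<open>P a \<le> P b\<close> by simp
  finally have \<Phi>_no_decay: "\<Phi> a \<le> \<Phi> b" .
  have \<Phi>_const: "\<Phi> s = \<Phi> a" if "a \<le> s" "s \<le> b" for s
    using \<Phi>_antimono[of a s, OF order_refl that] \<Phi>_antimono[of s b, OF that order_refl] \<Phi>_no_decay
    by linarith
  have "(p t + w t * P t) * exp (S t) = 0"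
  proof (rule DERIV_local_const)
    show "(\<Phi> has_real_derivative (p t + w t * P t) * exp (S t)) (at t)"
      using \<Phi>_deriv \<open>a < t\<close> \<open>t < b\<close> by simp
    show "0 < min (t - a) (b - t)"
      using \<open>a < t\<close> \<open>t < b\<close> by simp
    show "\<forall>y. \<bar>t - y\<bar> < min (t - a) (b - t) \<longrightarrow> \<Phi> t = \<Phi> y"
    proof (intro allI impI)
      fix y assume "\<bar>t - y\<bar> < min (t - a) (b - t)"
      then have "a \<le> y" "y \<le> b"
        by (simp_all add: abs_less_iff)
      then show "\<Phi> t = \<Phi> y"
        using \<Phi>_const[of t] \<Phi>_const[of y] \<open>a < t\<close> \<open>t < b\<close> by simp
    qed
  qed
  then show ?thesis by simp
qed


locale nonneg_solution =
  fixes a1 b1 c1 a2 b2 c2 k :: real and u v :: "real \<Rightarrow> real"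
  assumes b1_nonneg: "b1 \<ge> 0" and b2_nonneg: "b2 \<ge> 0" and c1_pos: "c1 > 0" and c2_pos: "c2 > 0"
    and a2_nonneg: "a2 \<ge> 0" and k_nonneg: "k \<ge> 0"
    and solution: "is_solution a1 b1 c1 a2 b2 c2 k u v"
    and u_nonneg: "u t \<ge> 0" and v_nonneg: "v t \<ge> 0"
begin

definition growth_u :: "real \<Rightarrow> real" where
  "growth_u t = a1 - b1 * u t - c1 * v t"

definition growth_v :: "real \<Rightarrow> real" where
  "growth_v t = a2 / (1 + k * u t) - b2 * v t - c2 * u t"

definition growth_v_sensitivity :: "real \<Rightarrow> real" where
  "growth_v_sensitivity t = a2 * k / (1 + k * u t)^2 + c2"

definition dissipation :: "real \<Rightarrow> real" where
  "dissipation t = c1 * v t * (growth_v t)^2 + growth_v_sensitivity t * u t * (growth_u t)^2"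

lemma denominator_pos: "1 + k * u t > 0"
  using u_nonneg[of t] k_nonneg by (simp add: add_pos_nonneg)

lemma growth_v_sensitivity_pos: "growth_v_sensitivity t > 0"
  unfolding growth_v_sensitivity_def using a2_nonneg k_nonneg c2_pos by (simp add: add_nonneg_pos)

lemma u_has_derivative: "(u has_real_derivative u t * growth_u t) (at t)"
proof -
  have "a1 * u t - b1 * (u t)^2 - c1 * u t * v t = u t * growth_u t"
    unfolding growth_u_def by (simp add: power2_eq_square algebra_simps)
  then show ?thesis
    using solution unfolding is_solution_def by metis
qed

lemma v_has_derivative: "(v has_real_derivative v t * growth_v t) (at t)"
proof -
  have "a2 * v t / (1 + k * u t) - b2 * (v t)^2 - c2 * u t * v t = v t * growth_v t"
    unfolding growth_v_def by (simp add: power2_eq_square algebra_simps)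
  then show ?thesis
    using solution unfolding is_solution_def by metis
qed

lemma isCont_u: "isCont u t"
  using u_has_derivative by (rule DERIV_isCont)

lemma isCont_v: "isCont v t"
  using v_has_derivative by (rule DERIV_isCont)

lemma continuous_on_growth_u: "continuous_on UNIV growth_u"
  unfolding growth_u_def[abs_def]
  by (intro continuous_at_imp_continuous_on ballI continuous_intros isCont_u isCont_v)

lemma continuous_on_growth_v: "continuous_on UNIV growth_v"
  using denominator_pos unfolding growth_v_def[abs_def]
  by (intro continuous_at_imp_continuous_on ballI continuous_intros isCont_u isCont_v)
    (metis less_irrefl)

lemma growth_u_has_derivative:
  "(growth_u has_real_derivative - b1 * (u t * growth_u t) - c1 * (v t * growth_v t)) (at t)"
proof -
  have "((\<lambda>t. a1 - b1 * u t - c1 * v t) has_real_derivative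
      - b1 * (u t * growth_u t) - c1 * (v t * growth_v t)) (at t)"
    by (rule derivative_eq_intros u_has_derivative v_has_derivative refl)+ simp
  then show ?thesis by (simp only: growth_u_def[symmetric])
qed

lemma growth_v_has_derivative:
  "(growth_v has_real_derivative
     - growth_v_sensitivity t * (u t * growth_u t) - b2 * (v t * growth_v t)) (at t)"
proof -
  have "((\<lambda>t. a2 / (1 + k * u t) - b2 * v t - c2 * u t) has_real_derivative
      - growth_v_sensitivity t * (u t * growth_u t) - b2 * (v t * growth_v t)) (at t)"
    using denominator_pos[of t]
    by (auto intro!: derivative_eq_intros u_has_derivative v_has_derivative
        simp: growth_v_sensitivity_def field_simps power2_eq_square)
  then show ?thesis by (simp only: growth_v_def[symmetric])
qed

lemma growth_product_has_derivative:
  "((\<lambda>t. growth_u t * growth_v t) has_real_derivative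
     - (b1 * u t + b2 * v t) * (growth_u t * growth_v t) - dissipation t) (at t)"
  using DERIV_mult[OF growth_u_has_derivative growth_v_has_derivative]
  unfolding dissipation_def by (simp add: power2_eq_square algebra_simps)

lemma dissipation_nonneg: "dissipation t \<ge> 0"
  unfolding dissipation_def using u_nonneg[of t] v_nonneg[of t] c1_pos growth_v_sensitivity_pos[of t]
  by (intro add_nonneg_nonneg mult_nonneg_nonneg) auto

lemma dissipation_eq_0_imp_stationary:
  assumes "dissipation t = 0"
  shows "u t * growth_u t = 0" and "v t * growth_v t = 0"
proof -
  have "c1 * v t * (growth_v t)^2 \<ge> 0" "growth_v_sensitivity t * u t * (growth_u t)^2 \<ge> 0"
    using u_nonneg[of t] v_nonneg[of t] c1_pos growth_v_sensitivity_pos[of t] by simp_all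
  then have "c1 * v t * (growth_v t)^2 = 0" "growth_v_sensitivity t * u t * (growth_u t)^2 = 0"
    using assms unfolding dissipation_def by linarith+
  then show "u t * growth_u t = 0" "v t * growth_v t = 0"
    using c1_pos growth_v_sensitivity_pos[of t] by (simp_all add: power2_eq_square)
qed

end

locale periodic_nonneg_solution = nonneg_solution +
  fixes T :: real
  assumes period_pos: "T > 0"
    and u_periodic: "u (t + T) = u t" and v_periodic: "v (t + T) = v t"
begin

lemma const_if_growth_product_nonneg:
  assumes "growth_u t0 * growth_v t0 \<ge> 0"
  shows "u t = u t0" and "v t = v t0"
proof -
  have "dissipation s = 0" if "t0 < s" "s < t0 + T" for s
  proof -
    have "- (b1 * u s + b2 * v s) * (growth_u s * growth_v s) - dissipation s
        = - (b1 * u s + b2 * v s) * (growth_u s * growth_v s)"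
    proof (rule subsolution_no_decay_imp_solution[where a = t0 and b = "t0 + T"
        and P = "\<lambda>t. growth_u t * growth_v t" and w = "\<lambda>t. b1 * u t + b2 * v t"
        and p = "\<lambda>t. - (b1 * u t + b2 * v t) * (growth_u t * growth_v t) - dissipation t"])
      show "growth_u t0 * growth_v t0 \<le> growth_u (t0 + T) * growth_v (t0 + T)"
        unfolding growth_u_def growth_v_def by (simp add: u_periodic v_periodic)
      show "continuous_on UNIV (\<lambda>t. b1 * u t + b2 * v t)"
        by (intro continuous_at_imp_continuous_on ballI continuous_intros isCont_u isCont_v)
      show "b1 * u x + b2 * v x \<ge> 0" for x
        using b1_nonneg b2_nonneg u_nonneg[of x] v_nonneg[of x] by simp
      show "- (b1 * u x + b2 * v x) * (growth_u x * growth_v x) - dissipation x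
          \<le> - (b1 * u x + b2 * v x) * (growth_u x * growth_v x)" for x
        using dissipation_nonneg[of x] by simp
      show "((\<lambda>t. growth_u t * growth_v t) has_real_derivative
          - (b1 * u x + b2 * v x) * (growth_u x * growth_v x) - dissipation x) (at x)" for x
        by (rule growth_product_has_derivative)
    qed (use that period_pos assms in simp_all)
    then show ?thesis by simp
  qed
  then have stationary: "u s * growth_u s = 0" "v s * growth_v s = 0" if "t0 < s" "s < t0 + T" for s
    using that dissipation_eq_0_imp_stationary by blast+
  show "u t = u t0"
    by (rule periodic_deriv_zero_on_period_imp_const[OF period_pos u_periodic u_has_derivative])
      (use stationary in simp)
  show "v t = v t0"
    by (rule periodic_deriv_zero_on_period_imp_const[OF period_pos v_periodic v_has_derivative])
      (use stationary in simp)
qed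

lemma u_const_if_growth_u_nonzero:
  assumes "\<And>t. growth_u t \<noteq> 0"
  shows "u t = u 0"
  using continuous_nonzero_imp_sign[OF continuous_on_growth_u assms] u_nonneg
  by (intro periodic_deriv_sign_imp_const[OF period_pos u_periodic u_has_derivative]
      nonneg_mult_constant_sign)

lemma v_const_if_growth_v_nonzero:
  assumes "\<And>t. growth_v t \<noteq> 0"
  shows "v t = v 0"
  using continuous_nonzero_imp_sign[OF continuous_on_growth_v assms] v_nonneg
  by (intro periodic_deriv_sign_imp_const[OF period_pos v_periodic v_has_derivative]
      nonneg_mult_constant_sign)

lemma solution_constant: "u t = u 0 \<and> v t = v 0"
proof (cases "\<exists>t0. growth_u t0 * growth_v t0 \<ge> 0")
  case True
  then obtain t0 where "growth_u t0 * growth_v t0 \<ge> 0" by blast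
  then have "u t = u t0" "u 0 = u t0" "v t = v t0" "v 0 = v t0"
    using const_if_growth_product_nonneg by blast+
  then show ?thesis by simp
next
  case False
  then have "growth_u s \<noteq> 0" "growth_v s \<noteq> 0" for s
    by (metis mult_zero_left mult_zero_right order_refl)+
  then show ?thesis
    using u_const_if_growth_u_nonzero v_const_if_growth_v_nonzero by blast
qed

end

theorem mainTheorem6:
  fixes a1 b1 c1 a2 b2 c2 k :: real
  assumes "a1 > 0" "b1 > 0" "c1 > 0" "a2 > 0" "b2 > 0" "c2 > 0" "k \<ge> 0"
  shows "\<not> (\<exists>u v. periodic_orbit a1 b1 c1 a2 b2 c2 k u v \<and> (\<forall>t. u t \<ge> 0 \<and> v t \<ge> 0))"
proof
  assume "\<exists>u v. periodic_orbit a1 b1 c1 a2 b2 c2 k u v \<and> (\<forall>t. u t \<ge> 0 \<and> v t \<ge> 0)"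
  then obtain u v T where solution: "is_solution a1 b1 c1 a2 b2 c2 k u v"
    and periodic: "T > 0" "\<forall>t. u (t + T) = u t \<and> v (t + T) = v t"
    and nonconstant: "\<not> (\<exists>p q. \<forall>t. u t = p \<and> v t = q)"
    and nonneg: "\<forall>t. u t \<ge> 0 \<and> v t \<ge> 0"
    unfolding periodic_orbit_def by blast
  interpret periodic_nonneg_solution a1 b1 c1 a2 b2 c2 k u v T
    using assms solution periodic nonneg by unfold_locales auto
  from solution_constant nonconstant show False by blast
qed

end
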